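(* There is a constant $c>0$ such that the following holds for all $n\ge 2$. Let $q,t_1,\dots,t_n$ be $n+1$ distinct qubits, and for each $i$ let $D_i$ be an arbitrary diagonal two-qubit unitary gate acting on the pair $(q,t_i)$. Then the operator $D_nD_{n-1}\cdots D_1$ can be embedded, using at most $cn$ ancillae, in a quantum circuit of depth at most $c\log n$.
   Context: Qubits have computational basis $|0\rangle,|1\rangle$. A diagonal two-qubit gate is a unitary of the form $\mathrm{diag}(e^{i\theta_{00}},e^{i\theta_{01}},e^{i\theta_{10}},e^{i\theta_{11}})$ in the computational basis. A one-layer circuit is a tensor product of arbitrary one-qubit and two-qubit unitary gates acting on pairwise disjoint sets of qubits; a circuit of depth $k$ is a product of $k$ one-layer circuits. An operator $F$ on $n'$ qubits is embedded in an operator $M$ on $n'+m$ qubits using $m$ ancillae if $M(|\psi\rangle\otimes|0\cdots0\rangle)=(F|\psi\rangle)\otimes|0\cdots0\rangle$ for all $|\psi\rangle$, where the last $m$ qubits are the ancillae. *)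

theory Defs
  imports Complex_Main "Jordan_Normal_Form.Matrix"
begin

text \<open>Conventions. An operator on N qubits is a complex 2^N x 2^N matrix acting on
column vectors indexed by 0..2^N-1; the value of qubit k in basis index i is bit k of i.\<close>

definition bitq :: "nat \<Rightarrow> nat \<Rightarrow> nat" where
  "bitq k i = (i div 2 ^ k) mod 2"

definition adj :: "complex mat \<Rightarrow> complex mat" where
  "adj U = mat (dim_col U) (dim_row U) (\<lambda>(i, j). cnj (U $$ (j, i)))"

definition unitary_mat :: "nat \<Rightarrow> complex mat \<Rightarrow> bool" where
  "unitary_mat d U \<longleftrightarrow> U \<in> carrier_mat d d \<and> U * adj U = 1\<^sub>m d"

definition gate1_op :: "nat \<Rightarrow> nat \<Rightarrow> complex mat \<Rightarrow> complex mat" where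
  "gate1_op N a U = mat (2 ^ N) (2 ^ N) (\<lambda>(i, j).
     if (\<forall>k. k \<noteq> a \<longrightarrow> bitq k i = bitq k j) then U $$ (bitq a i, bitq a j) else 0)"

definition gate2_op :: "nat \<Rightarrow> nat \<Rightarrow> nat \<Rightarrow> complex mat \<Rightarrow> complex mat" where
  "gate2_op N a b U = mat (2 ^ N) (2 ^ N) (\<lambda>(i, j).
     if (\<forall>k. k \<noteq> a \<and> k \<noteq> b \<longrightarrow> bitq k i = bitq k j)
     then U $$ (2 * bitq a i + bitq b i, 2 * bitq a j + bitq b j) else 0)"

datatype gate = G1 nat "complex mat" | G2 nat nat "complex mat"

fun gate_supp :: "gate \<Rightarrow> nat set" where
  "gate_supp (G1 a U) = {a}"
| "gate_supp (G2 a b U) = {a, b}"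

fun valid_gate :: "nat \<Rightarrow> gate \<Rightarrow> bool" where
  "valid_gate N (G1 a U) \<longleftrightarrow> a < N \<and> unitary_mat 2 U"
| "valid_gate N (G2 a b U) \<longleftrightarrow> a < N \<and> b < N \<and> a \<noteq> b \<and> unitary_mat 4 U"

fun gate_op :: "nat \<Rightarrow> gate \<Rightarrow> complex mat" where
  "gate_op N (G1 a U) = gate1_op N a U"
| "gate_op N (G2 a b U) = gate2_op N a b U"

definition valid_layer :: "nat \<Rightarrow> gate list \<Rightarrow> bool" where
  "valid_layer N L \<longleftrightarrow> (\<forall>g \<in> set L. valid_gate N g) \<and>
     (\<forall>i < length L. \<forall>j < length L. i \<noteq> j \<longrightarrow> gate_supp (L ! i) \<inter> gate_supp (L ! j) = {})"

definition layer_op :: "nat \<Rightarrow> gate list \<Rightarrow> complex mat" where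
  "layer_op N L = foldr (\<lambda>g M. gate_op N g * M) L (1\<^sub>m (2 ^ N))"

text \<open>A circuit of depth k = list of k layers; its operator is their product.\<close>
definition circuit_op :: "nat \<Rightarrow> gate list list \<Rightarrow> complex mat" where
  "circuit_op N C = foldr (\<lambda>L M. layer_op N L * M) C (1\<^sub>m (2 ^ N))"

text \<open>|psi> (x) |0...0>, ancillae being the last m qubits (high bits).\<close>
definition pad_anc :: "nat \<Rightarrow> nat \<Rightarrow> complex vec \<Rightarrow> complex vec" where
  "pad_anc n' m \<psi> = vec (2 ^ (n' + m)) (\<lambda>i. if i < 2 ^ n' then \<psi> $ i else 0)"

definition embeds :: "nat \<Rightarrow> nat \<Rightarrow> complex mat \<Rightarrow> complex mat \<Rightarrow> bool" where
  "embeds n' m F M \<longleftrightarrow>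
     (\<forall>\<psi> \<in> carrier_vec (2 ^ n'). M *\<^sub>v pad_anc n' m \<psi> = pad_anc n' m (F *\<^sub>v \<psi>))"

definition diag_gate :: "(nat \<Rightarrow> real) \<Rightarrow> complex mat" where
  "diag_gate th = mat 4 4 (\<lambda>(i, j). if i = j then exp (\<i> * complex_of_real (th i)) else 0)"

definition diag_product :: "nat \<Rightarrow> nat \<Rightarrow> (nat \<Rightarrow> nat) \<Rightarrow> (nat \<Rightarrow> nat \<Rightarrow> real) \<Rightarrow> complex mat" where
  "diag_product n q t th =
     foldr (\<lambda>i M. gate2_op (n + 1) q (t i) (diag_gate (th i)) * M) (rev [1..<n + 1]) (1\<^sub>m (2 ^ (n + 1)))"

end

theory Submission
  imports Defs
begin

text \<open>Each D_i multiplies a basis state x by a phase depending only on the bits x_q and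
x_(t_i), so D_n \<cdots> D_1 is diagonal. A doubling tree of CNOTs of depth K, where
2^(K-1) < n \<le> 2^K, copies x_q onto 2^K - 1 ancillae. Moving D_i to the pair
(copy i-1 of q, t_i) makes the n gates act on pairwise disjoint pairs, so they form a
single layer, after which the tree is undone. This gives depth 2K + 1 = O(log n) with fewer
than 2n ancillae. All gates involved map basis vectors to multiples of basis vectors, so a
circuit is tracked by a map on basis indices together with a phase.\<close>

lemma bitq_eq_of_bool_bit: "bitq k i = of_bool (bit i k)"
  by (simp add: bitq_def bit_iff_odd odd_iff_mod_2_eq_one)

lemma less_two_pow_iff_high_bits: "(x::nat) < 2 ^ N \<longleftrightarrow> (\<forall>k\<ge>N. \<not> bit x k)"
proof -
  have "x < 2 ^ N \<longleftrightarrow> take_bit N x = x"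
    by (simp add: take_bit_nat_eq_self_iff)
  also have "\<dots> \<longleftrightarrow> (\<forall>k\<ge>N. \<not> bit x k)"
    by (simp add: bit_eq_iff bit_take_bit_iff) (meson not_le)
  finally show ?thesis .
qed

definition pair_index :: "nat \<Rightarrow> nat \<Rightarrow> nat \<Rightarrow> nat" where
  "pair_index a b i = 2 * bitq a i + bitq b i"

lemma pair_index_less_4: "pair_index a b i < 4"
  by (simp add: pair_index_def bitq_eq_of_bool_bit)

lemma eq_iff_pair_index_and_other_bits:
  "(i::nat) = j \<longleftrightarrow>
     pair_index a b i = pair_index a b j \<and> (\<forall>k. k \<noteq> a \<and> k \<noteq> b \<longrightarrow> bitq k i = bitq k j)"
proof (intro iffI; (elim conjE)?)
  assume pair: "pair_index a b i = pair_index a b j"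
    and other: "\<forall>k. k \<noteq> a \<and> k \<noteq> b \<longrightarrow> bitq k i = bitq k j"
  have pair_bits: "bit i a = bit j a \<and> bit i b = bit j b"
    using pair by (cases "bit i a"; cases "bit j a"; cases "bit i b"; cases "bit j b")
      (simp_all add: pair_index_def bitq_eq_of_bool_bit)
  show "i = j"
  proof (rule bit_eqI)
    fix k
    show "bit i k = bit j k"
      using pair_bits other by (cases "k = a \<or> k = b") (auto simp: bitq_eq_of_bool_bit of_bool_eq_iff)
  qed
qed simp

lemma index_gate2_op:
  assumes "i < 2 ^ N" "j < 2 ^ N"
  shows "gate2_op N a b U $$ (i, j) =
    (if \<forall>k. k \<noteq> a \<and> k \<noteq> b \<longrightarrow> bitq k i = bitq k j
     then U $$ (pair_index a b i, pair_index a b j) else 0)"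
  using assms unfolding gate2_op_def pair_index_def by (simp only: index_mat(1) prod.case)

section \<open>Monomial matrices\<close>

definition monomial_mat :: "nat \<Rightarrow> (nat \<Rightarrow> nat) \<Rightarrow> (nat \<Rightarrow> complex) \<Rightarrow> complex mat \<Rightarrow> bool" where
  "monomial_mat N f \<phi> M \<longleftrightarrow> M \<in> carrier_mat (2 ^ N) (2 ^ N) \<and> (\<forall>j<2 ^ N. f j < 2 ^ N) \<and>
     (\<forall>i<2 ^ N. \<forall>j<2 ^ N. M $$ (i, j) = (if i = f j then \<phi> j else 0))"

lemma monomial_mat_one: "monomial_mat N id (\<lambda>_. 1) (1\<^sub>m (2 ^ N))"
  by (auto simp: monomial_mat_def)

lemma monomial_mat_mult:
  assumes A: "monomial_mat N f \<phi> A" and B: "monomial_mat N g \<psi> B"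
  shows "monomial_mat N (f \<circ> g) (\<lambda>j. \<phi> (g j) * \<psi> j) (A * B)"
  unfolding monomial_mat_def
proof (intro conjI allI impI)
  show "A * B \<in> carrier_mat (2 ^ N) (2 ^ N)"
    using A B by (auto simp: monomial_mat_def)
  fix j :: nat assume j: "j < 2 ^ N"
  then have gj: "g j < 2 ^ N"
    using B by (auto simp: monomial_mat_def)
  then show "(f \<circ> g) j < 2 ^ N"
    using A by (auto simp: monomial_mat_def)
  fix i :: nat assume i: "i < 2 ^ N"
  have "(A * B) $$ (i, j) = (\<Sum>k<2 ^ N. A $$ (i, k) * B $$ (k, j))"
    using A B i j by (auto simp: monomial_mat_def scalar_prod_def lessThan_atLeast0)
  also have "\<dots> = (\<Sum>k<2 ^ N. if k = g j then A $$ (i, g j) * \<psi> j else 0)"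
    using B j by (intro sum.cong) (auto simp: monomial_mat_def)
  also have "\<dots> = A $$ (i, g j) * \<psi> j"
    using gj by simp
  also have "\<dots> = (if i = (f \<circ> g) j then \<phi> (g j) * \<psi> j else 0)"
    using A i gj by (simp add: monomial_mat_def)
  finally show "(A * B) $$ (i, j) = (if i = (f \<circ> g) j then \<phi> (g j) * \<psi> j else 0)" .
qed

lemma monomial_mat_id_mult_vec:
  assumes M: "monomial_mat N id \<phi> M" and v: "v \<in> carrier_vec (2 ^ N)"
  shows "M *\<^sub>v v = vec (2 ^ N) (\<lambda>i. \<phi> i * v $ i)"
proof (rule eq_vecI)
  show "dim_vec (M *\<^sub>v v) = dim_vec (vec (2 ^ N) (\<lambda>i. \<phi> i * v $ i))"
    using M by (auto simp: monomial_mat_def)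
  fix i assume "i < dim_vec (vec (2 ^ N) (\<lambda>i. \<phi> i * v $ i))"
  then have i: "i < 2 ^ N" by simp
  have "(M *\<^sub>v v) $ i = (\<Sum>k\<in>{0..<2 ^ N}. M $$ (i, k) * v $ k)"
    using M v i by (auto simp: monomial_mat_def scalar_prod_def)
  also have "\<dots> = (\<Sum>k\<in>{0..<2 ^ N}. if k = i then \<phi> i * v $ i else 0)"
    using M i by (intro sum.cong) (auto simp: monomial_mat_def)
  finally show "(M *\<^sub>v v) $ i = vec (2 ^ N) (\<lambda>i. \<phi> i * v $ i) $ i"
    using i by simp
qed

text \<open>The ancillae are the high bits, so a padded vector is supported on indices below 2^n'
and only the phases there matter.\<close>

lemma embeds_if_diagonal_phases_agree:
  assumes M: "monomial_mat (n' + m) id \<phi> M" and F: "monomial_mat n' id \<rho> F"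
    and agree: "\<forall>j<2 ^ n'. \<phi> j = \<rho> j"
  shows "embeds n' m F M"
  unfolding embeds_def
proof
  fix \<psi> :: "complex vec" assume \<psi>: "\<psi> \<in> carrier_vec (2 ^ n')"
  have "M *\<^sub>v pad_anc n' m \<psi> = vec (2 ^ (n' + m)) (\<lambda>i. \<phi> i * pad_anc n' m \<psi> $ i)"
    by (rule monomial_mat_id_mult_vec[OF M]) (simp add: pad_anc_def)
  also have "\<dots> = pad_anc n' m (F *\<^sub>v \<psi>)"
    using agree by (auto simp: monomial_mat_id_mult_vec[OF F \<psi>] pad_anc_def)
  finally show "M *\<^sub>v pad_anc n' m \<psi> = pad_anc n' m (F *\<^sub>v \<psi>)" .
qed

lemma monomial_mat_gate2_op:
  assumes U: "\<forall>u<4. \<forall>v<4. U $$ (u, v) = (if u = \<sigma> v then \<psi> v else 0)"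
    and F_range: "\<forall>j<2 ^ N. F j < 2 ^ N"
    and F_pair: "\<forall>j. pair_index a b (F j) = \<sigma> (pair_index a b j)"
    and F_other: "\<forall>j k. k \<noteq> a \<and> k \<noteq> b \<longrightarrow> bitq k (F j) = bitq k j"
  shows "monomial_mat N F (\<lambda>j. \<psi> (pair_index a b j)) (gate2_op N a b U)"
  unfolding monomial_mat_def
proof (intro conjI allI impI)
  fix i j :: nat assume i: "i < 2 ^ N" and j: "j < 2 ^ N"
  have eq: "i = F j \<longleftrightarrow> pair_index a b i = \<sigma> (pair_index a b j) \<and>
      (\<forall>k. k \<noteq> a \<and> k \<noteq> b \<longrightarrow> bitq k i = bitq k j)"
    using eq_iff_pair_index_and_other_bits[of i "F j" a b] F_pair F_other by metis
  show "gate2_op N a b U $$ (i, j) = (if i = F j then \<psi> (pair_index a b j) else 0)"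
  proof (cases "\<forall>k. k \<noteq> a \<and> k \<noteq> b \<longrightarrow> bitq k i = bitq k j")
    case True
    moreover have "\<sigma> (pair_index a b j) < 4"
      using F_pair pair_index_less_4 by metis
    ultimately show ?thesis
      using eq U pair_index_less_4[of a b i] pair_index_less_4[of a b j]
      by (simp add: index_gate2_op[OF i j])
  next
    case False
    with eq have "i \<noteq> F j"
      by blast
    moreover have "gate2_op N a b U $$ (i, j) = 0"
      unfolding index_gate2_op[OF i j] using False by (rule if_not_P)
    ultimately show ?thesis
      by simp
  qed
qed (use F_range in \<open>auto simp: gate2_op_def\<close>)

definition cnot_perm :: "nat \<Rightarrow> nat" where
  "cnot_perm v = (if v = 2 then 3 else if v = 3 then 2 else v)"

definition cnot_mat :: "complex mat" where
  "cnot_mat = mat 4 4 (\<lambda>(u, v). if u = cnot_perm v then 1 else 0)"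

definition cnot_index :: "nat \<Rightarrow> nat \<Rightarrow> nat \<Rightarrow> nat" where
  "cnot_index a b j = (if bit j a then flip_bit b j else j)"

lemma bit_cnot_index: "bit (cnot_index a b j) k = (if k = b then bit j b \<noteq> bit j a else bit j k)"
  by (auto simp: cnot_index_def bit_flip_bit_iff)

lemma cnot_index_involution: "a \<noteq> b \<Longrightarrow> cnot_index a b (cnot_index a b j) = j"
  by (rule bit_eqI) (auto simp: bit_cnot_index)

lemma less_4_cases: "(i::nat) < 4 \<longleftrightarrow> i = 0 \<or> i = 1 \<or> i = 2 \<or> i = 3"
  by auto

lemma sum_upto_4: "(\<Sum>k\<in>{0..<4::nat}. f k) = f 0 + f 1 + f 2 + (f 3 :: complex)"
  by (simp add: atLeast0LessThan numeral_eq_Suc lessThan_Suc ac_simps)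

lemma unitary_cnot_mat: "unitary_mat 4 cnot_mat"
  unfolding unitary_mat_def
proof
  show "cnot_mat \<in> carrier_mat 4 4"
    by (simp add: cnot_mat_def)
  show "cnot_mat * adj cnot_mat = 1\<^sub>m 4"
    by (rule eq_matI)
      (auto simp: less_4_cases cnot_mat_def adj_def scalar_prod_def sum_upto_4 cnot_perm_def)
qed

lemma exp_i_mult_cnj: "exp (\<i> * complex_of_real x) * cnj (exp (\<i> * complex_of_real x)) = 1"
  by (simp add: cis_conv_exp[symmetric] cis_cnj cis_mult)

lemma unitary_diag_gate: "unitary_mat 4 (diag_gate th)"
  unfolding unitary_mat_def
proof
  show "diag_gate th \<in> carrier_mat 4 4"
    by (simp add: diag_gate_def)
  show "diag_gate th * adj (diag_gate th) = 1\<^sub>m 4"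
    by (rule eq_matI)
      (auto simp: less_4_cases diag_gate_def adj_def scalar_prod_def sum_upto_4 exp_i_mult_cnj)
qed

datatype cgate = CNOT nat nat | Diag nat nat "nat \<Rightarrow> real"

fun to_gate :: "cgate \<Rightarrow> gate" where
  "to_gate (CNOT a b) = G2 a b cnot_mat"
| "to_gate (Diag a b th) = G2 a b (diag_gate th)"

fun cgate_supp :: "cgate \<Rightarrow> nat set" where
  "cgate_supp (CNOT a b) = {a, b}"
| "cgate_supp (Diag a b th) = {a, b}"

fun wf_cgate :: "nat \<Rightarrow> cgate \<Rightarrow> bool" where
  "wf_cgate N (CNOT a b) \<longleftrightarrow> a < N \<and> b < N \<and> a \<noteq> b"
| "wf_cgate N (Diag a b th) \<longleftrightarrow> a < N \<and> b < N \<and> a \<noteq> b"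

fun cgate_perm :: "cgate \<Rightarrow> nat \<Rightarrow> nat" where
  "cgate_perm (CNOT a b) = cnot_index a b"
| "cgate_perm (Diag a b th) = id"

fun cgate_phase :: "cgate \<Rightarrow> nat \<Rightarrow> complex" where
  "cgate_phase (CNOT a b) = (\<lambda>_. 1)"
| "cgate_phase (Diag a b th) = (\<lambda>j. exp (\<i> * complex_of_real (th (pair_index a b j))))"

lemma valid_gate_to_gate: "wf_cgate N g \<Longrightarrow> valid_gate N (to_gate g)"
  by (cases g) (auto simp: unitary_cnot_mat unitary_diag_gate)

lemma gate_supp_to_gate: "gate_supp (to_gate g) = cgate_supp g"
  by (cases g) auto

lemma monomial_mat_gate_op:
  assumes "wf_cgate N g"
  shows "monomial_mat N (cgate_perm g) (cgate_phase g) (gate_op N (to_gate g))"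
proof (cases g)
  case (CNOT a b)
  with assms have "a < N" "b < N" "a \<noteq> b" by auto
  then have "monomial_mat N (cnot_index a b) (\<lambda>j. (\<lambda>_. 1) (pair_index a b j))
      (gate2_op N a b cnot_mat)"
    by (intro monomial_mat_gate2_op[where \<sigma> = cnot_perm])
      (auto simp: cnot_mat_def less_two_pow_iff_high_bits bit_cnot_index pair_index_def
        bitq_eq_of_bool_bit cnot_perm_def)
  with CNOT show ?thesis by simp
next
  case (Diag a b th)
  have "monomial_mat N id (\<lambda>j. (\<lambda>v. exp (\<i> * complex_of_real (th v))) (pair_index a b j))
      (gate2_op N a b (diag_gate th))"
    by (rule monomial_mat_gate2_op) (auto simp: diag_gate_def)
  with Diag show ?thesis by simp
qed

text \<open>A gate list [g_1, \<dots>, g_k] stands for the product g_1 \<cdots> g_k, so g_k acts first.\<close>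

fun seq_perm :: "cgate list \<Rightarrow> nat \<Rightarrow> nat" where
  "seq_perm [] = id"
| "seq_perm (g # gs) = cgate_perm g \<circ> seq_perm gs"

fun seq_phase :: "cgate list \<Rightarrow> nat \<Rightarrow> complex" where
  "seq_phase [] = (\<lambda>_. 1)"
| "seq_phase (g # gs) = (\<lambda>j. cgate_phase g (seq_perm gs j) * seq_phase gs j)"

lemma seq_perm_append: "seq_perm (gs @ hs) = seq_perm gs \<circ> seq_perm hs"
  by (induction gs) auto

lemma seq_phase_append: "seq_phase (gs @ hs) j = seq_phase gs (seq_perm hs j) * seq_phase hs j"
  by (induction gs) (auto simp: seq_perm_append)

lemma monomial_mat_layer_op:
  "\<forall>g\<in>set gs. wf_cgate N g \<Longrightarrow>
    monomial_mat N (seq_perm gs) (seq_phase gs) (layer_op N (map to_gate gs))"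
proof (induction gs)
  case Nil
  show ?case
    using monomial_mat_one[of N] by (simp add: layer_op_def id_def)
next
  case (Cons g gs)
  then have "monomial_mat N (cgate_perm g \<circ> seq_perm gs) (\<lambda>j. cgate_phase g (seq_perm gs j) * seq_phase gs j)
      (gate_op N (to_gate g) * layer_op N (map to_gate gs))"
    by (intro monomial_mat_mult monomial_mat_gate_op) auto
  then show ?case
    by (simp add: layer_op_def comp_def)
qed

lemma monomial_mat_circuit_op:
  "\<forall>L\<in>set Ls. \<forall>g\<in>set L. wf_cgate N g \<Longrightarrow>
    monomial_mat N (seq_perm (concat Ls)) (seq_phase (concat Ls)) (circuit_op N (map (map to_gate) Ls))"
proof (induction Ls)
  case Nil
  show ?case
    using monomial_mat_one[of N] by (simp add: circuit_op_def id_def)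
next
  case (Cons L Ls)
  then have "monomial_mat N (seq_perm L \<circ> seq_perm (concat Ls))
      (\<lambda>j. seq_phase L (seq_perm (concat Ls) j) * seq_phase (concat Ls) j)
      (layer_op N (map to_gate L) * circuit_op N (map (map to_gate) Ls))"
    by (intro monomial_mat_mult monomial_mat_layer_op) auto
  then show ?case
    by (simp add: circuit_op_def seq_perm_append seq_phase_append comp_def)
qed

definition wf_layer :: "nat \<Rightarrow> cgate list \<Rightarrow> bool" where
  "wf_layer N gs \<longleftrightarrow> (\<forall>g\<in>set gs. wf_cgate N g) \<and> distinct gs \<and>
     pairwise (\<lambda>g h. disjnt (cgate_supp g) (cgate_supp h)) (set gs)"

lemma valid_layer_map_to_gate:
  assumes "wf_layer N gs"
  shows "valid_layer N (map to_gate gs)"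
  unfolding valid_layer_def
proof (intro conjI ballI allI impI)
  fix g assume "g \<in> set (map to_gate gs)"
  then show "valid_gate N g"
    using assms valid_gate_to_gate by (auto simp: wf_layer_def)
next
  fix i j assume "i < length (map to_gate gs)" "j < length (map to_gate gs)" "i \<noteq> j"
  with assms have "disjnt (cgate_supp (gs ! i)) (cgate_supp (gs ! j))"
    by (auto simp: wf_layer_def nth_eq_iff_index_eq pairwise_def)
  then show "gate_supp (map to_gate gs ! i) \<inter> gate_supp (map to_gate gs ! j) = {}"
    using \<open>i < length (map to_gate gs)\<close> \<open>j < length (map to_gate gs)\<close>
    by (simp add: gate_supp_to_gate disjnt_def)
qed

lemma wf_layer_map:
  assumes "\<forall>i\<in>set xs. wf_cgate N (f i)" and "distinct xs"
    and "\<forall>i\<in>set xs. \<forall>i'\<in>set xs. i \<noteq> i' \<longrightarrow> disjnt (cgate_supp (f i)) (cgate_supp (f i'))"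
  shows "wf_layer N (map f xs)"
proof -
  have "cgate_supp g \<noteq> {}" for g
    by (cases g) auto
  with assms(3) have "inj_on f (set xs)"
    by (metis disjnt_self_iff_empty inj_onI)
  with assms show ?thesis
    by (auto simp: wf_layer_def distinct_map pairwise_def)
qed

definition cnots :: "(nat \<times> nat) list \<Rightarrow> cgate list" where
  "cnots = map (\<lambda>(a, b). CNOT a b)"

lemma cnots_Cons: "cnots ((a, b) # ps) = CNOT a b # cnots ps"
  by (simp add: cnots_def)

lemma rev_cnots: "rev (cnots ps) = cnots (rev ps)"
  by (simp add: cnots_def rev_map)

lemma seq_phase_cnots: "seq_phase (cnots ps) j = 1"
  by (induction ps arbitrary: j) (auto simp: cnots_def)

lemma seq_perm_rev_cnots_inverse:
  "\<forall>(a, b)\<in>set ps. a \<noteq> b \<Longrightarrow> seq_perm (rev (cnots ps)) (seq_perm (cnots ps) x) = x"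
  by (induction ps arbitrary: x) (auto simp: cnots_def seq_perm_append cnot_index_involution)

lemma bit_seq_perm_cnots_untargeted:
  "k \<notin> snd ` set ps \<Longrightarrow> bit (seq_perm (cnots ps) x) k = bit x k"
  by (induction ps) (auto simp: cnots_def bit_cnot_index)

lemma bit_seq_perm_cnots_target:
  assumes "distinct (map snd ps)" and "fst ` set ps \<inter> snd ` set ps = {}" and "(a, b) \<in> set ps"
  shows "bit (seq_perm (cnots ps) x) b = (bit x b \<noteq> bit x a)"
  using assms
proof (induction ps)
  case Nil
  then show ?case by simp
next
  case (Cons p ps)
  show ?case
  proof (cases "p = (a, b)")
    case True
    with Cons.prems have "b \<notin> snd ` set ps" "a \<notin> snd ` set ps"
      by (auto simp: image_iff)
    with True show ?thesis
      by (simp add: cnots_Cons bit_cnot_index bit_seq_perm_cnots_untargeted)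
  next
    case False
    obtain a' b' where p: "p = (a', b')"
      by fastforce
    with False Cons.prems have "(a, b) \<in> set ps" "b \<noteq> b'"
      by (auto simp: image_iff)
    with Cons.IH Cons.prems p show ?thesis
      by (simp add: cnots_Cons bit_cnot_index)
  qed
qed

section \<open>The fan-out circuit\<close>

text \<open>Qubits 0..n carry the input. Qubit n + j with 1 \<le> j < 2^K is an ancilla receiving copy j
of qubit q; copy 0 is q itself. In round r the 2^r existing copies are copied in parallel.\<close>

definition copy_qubit :: "nat \<Rightarrow> nat \<Rightarrow> nat \<Rightarrow> nat" where
  "copy_qubit n q j = (if j = 0 then q else n + j)"

lemma copy_qubit_eq_iff: "q \<le> n \<Longrightarrow> copy_qubit n q j = copy_qubit n q j' \<longleftrightarrow> j = j'"
  by (auto simp: copy_qubit_def)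

lemma copy_qubit_neq_input: "k \<le> n \<Longrightarrow> k \<noteq> q \<Longrightarrow> copy_qubit n q j \<noteq> k"
  by (auto simp: copy_qubit_def)

lemma copy_qubit_less: "q \<le> n \<Longrightarrow> j < 2 ^ K \<Longrightarrow> copy_qubit n q j < n + 2 ^ K"
  by (auto simp: copy_qubit_def)

definition fanout_pairs :: "nat \<Rightarrow> nat \<Rightarrow> nat \<Rightarrow> (nat \<times> nat) list" where
  "fanout_pairs n q r = map (\<lambda>j. (copy_qubit n q j, n + 2 ^ r + j)) [0..<2 ^ r]"

definition fanout_gates :: "nat \<Rightarrow> nat \<Rightarrow> nat \<Rightarrow> cgate list" where
  "fanout_gates n q K = cnots (concat (rev (map (fanout_pairs n q) [0..<K])))"

lemma fanout_pairs_controls_targets: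
  assumes "q \<le> n"
  shows "distinct (map snd (fanout_pairs n q r))"
    and "fst ` set (fanout_pairs n q r) \<inter> snd ` set (fanout_pairs n q r) = {}"
  using assms by (auto simp: fanout_pairs_def copy_qubit_def distinct_map inj_on_def split: if_splits)

lemma bit_seq_perm_fanout_gates:
  assumes q: "q \<le> n" and x: "x < 2 ^ (n + 1)"
  shows "bit (seq_perm (fanout_gates n q r) x) k = (if n < k \<and> k < n + 2 ^ r then bit x q else bit x k)"
proof (induction r arbitrary: k)
  case 0
  show ?case
    by (auto simp: fanout_gates_def cnots_def)
next
  case (Suc r)
  let ?y = "seq_perm (fanout_gates n q r) x"
  have step: "seq_perm (fanout_gates n q (Suc r)) x = seq_perm (cnots (fanout_pairs n q r)) ?y"
    by (simp add: fanout_gates_def cnots_def seq_perm_append)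
  have high_x: "\<not> bit x k" if "n < k" for k
    using less_two_pow_iff_high_bits[of x "n + 1"] x that by simp
  show ?case
  proof (cases "n + 2 ^ r \<le> k \<and> k < n + 2 ^ Suc r")
    case True
    define j where "j = k - (n + 2 ^ r)"
    from True have j: "j < 2 ^ r" "k = n + 2 ^ r + j"
      by (auto simp: j_def)
    then have "(copy_qubit n q j, k) \<in> set (fanout_pairs n q r)"
      by (auto simp: fanout_pairs_def)
    then have "bit (seq_perm (cnots (fanout_pairs n q r)) ?y) k = (bit ?y k \<noteq> bit ?y (copy_qubit n q j))"
      using fanout_pairs_controls_targets[OF q] by (intro bit_seq_perm_cnots_target) auto
    moreover have "bit ?y (copy_qubit n q j) = bit x q"
      using Suc.IH q j by (simp add: copy_qubit_def)
    moreover have "\<not> bit ?y k"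
      using Suc.IH high_x j by simp
    ultimately show ?thesis
      using True j by (simp add: step)
  next
    case False
    then have "bit (seq_perm (cnots (fanout_pairs n q r)) ?y) k = bit ?y k"
      by (intro bit_seq_perm_cnots_untargeted) (auto simp: fanout_pairs_def)
    moreover have "n < k \<and> k < n + 2 ^ Suc r \<longleftrightarrow> n < k \<and> k < n + 2 ^ r"
      using False by auto
    ultimately show ?thesis
      using Suc.IH by (simp add: step)
  qed
qed

lemma bit_seq_perm_fanout_gates_copy:
  assumes "q \<le> n" "x < 2 ^ (n + 1)" "j < 2 ^ K"
  shows "bit (seq_perm (fanout_gates n q K) x) (copy_qubit n q j) = bit x q"
  using assms by (simp add: bit_seq_perm_fanout_gates copy_qubit_def)

definition diag_layer :: "nat \<Rightarrow> nat \<Rightarrow> (nat \<Rightarrow> nat) \<Rightarrow> (nat \<Rightarrow> nat \<Rightarrow> real) \<Rightarrow> cgate list" where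
  "diag_layer n q t th = map (\<lambda>i. Diag (copy_qubit n q (i - 1)) (t i) (th i)) (rev [1..<n + 1])"

text \<open>As in circuit_op, the last layer acts first. Reversing each CNOT layer of the
uncomputation makes its gate sequence exactly the reverse of the fan-out sequence.\<close>

definition fanout_circuit ::
    "nat \<Rightarrow> nat \<Rightarrow> (nat \<Rightarrow> nat) \<Rightarrow> (nat \<Rightarrow> nat \<Rightarrow> real) \<Rightarrow> nat \<Rightarrow> cgate list list" where
  "fanout_circuit n q t th K =
     (let Ls = map (\<lambda>r. cnots (fanout_pairs n q r)) [0..<K]
      in map rev Ls @ [diag_layer n q t th] @ rev Ls)"

lemma length_fanout_circuit: "length (fanout_circuit n q t th K) = 2 * K + 1"
  by (simp add: fanout_circuit_def)

lemma concat_fanout_circuit: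
  "concat (fanout_circuit n q t th K) =
     rev (fanout_gates n q K) @ diag_layer n q t th @ fanout_gates n q K"
proof -
  define Ls where "Ls = map (\<lambda>r. cnots (fanout_pairs n q r)) [0..<K]"
  have "concat (rev Ls) = fanout_gates n q K"
    by (simp only: Ls_def fanout_gates_def cnots_def map_concat rev_map map_map comp_def)
  then have "concat (map rev Ls) = rev (fanout_gates n q K)"
    by (metis rev_concat rev_rev_ident)
  with \<open>concat (rev Ls) = fanout_gates n q K\<close> show ?thesis
    by (simp only: fanout_circuit_def Ls_def[symmetric] Let_def concat_append concat.simps append_Nil2)
qed

lemma wf_layer_fanout_pairs:
  assumes q: "q \<le> n" and r: "r < K"
  shows "wf_layer (n + 2 ^ K) (cnots (fanout_pairs n q r))"
proof -
  have "(2::nat) ^ Suc r \<le> 2 ^ K"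
    using r by (intro power_increasing) auto
  then have "wf_cgate (n + 2 ^ K) (CNOT (copy_qubit n q j) (n + 2 ^ r + j))" if "j < 2 ^ r" for j
    using copy_qubit_less[OF q that] that by simp
  moreover have "disjnt (cgate_supp (CNOT (copy_qubit n q j) (n + 2 ^ r + j)))
      (cgate_supp (CNOT (copy_qubit n q j') (n + 2 ^ r + j')))"
    if "j < 2 ^ r" "j' < 2 ^ r" "j \<noteq> j'" for j j'
    using copy_qubit_less[OF q that(1)] copy_qubit_less[OF q that(2)] that
    by (auto simp: disjnt_def copy_qubit_eq_iff[OF q])
  ultimately have "wf_layer (n + 2 ^ K) (map (\<lambda>j. CNOT (copy_qubit n q j) (n + 2 ^ r + j)) [0..<2 ^ r])"
    by (intro wf_layer_map) auto
  then show ?thesis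
    by (simp add: cnots_def fanout_pairs_def comp_def)
qed

lemma wf_layer_diag_layer:
  assumes q: "q \<le> n" and t: "\<forall>i\<in>{1..n}. t i \<le> n \<and> t i \<noteq> q" and inj: "inj_on t {1..n}"
    and nK: "n \<le> 2 ^ K"
  shows "wf_layer (n + 2 ^ K) (diag_layer n q t th)"
  unfolding diag_layer_def
proof (intro wf_layer_map ballI impI)
  fix i assume "i \<in> set (rev [1..<n + 1])"
  with t have "i - 1 < n" and ti: "t i \<le> n" "t i \<noteq> q"
    by auto
  have "copy_qubit n q (i - 1) < n + 2 ^ K"
    using q \<open>i - 1 < n\<close> nK by (intro copy_qubit_less) auto
  moreover have "t i < n + 2 ^ K"
    using ti(1) zero_less_power[of "2::nat" K] by linarith
  moreover have "copy_qubit n q (i - 1) \<noteq> t i"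
    using ti by (rule copy_qubit_neq_input)
  ultimately show "wf_cgate (n + 2 ^ K) (Diag (copy_qubit n q (i - 1)) (t i) (th i))"
    by simp
next
  fix i i' assume i: "i \<in> set (rev [1..<n + 1])" and i': "i' \<in> set (rev [1..<n + 1])" and "i \<noteq> i'"
  with inj have "t i \<noteq> t i'"
    by (auto simp: inj_on_eq_iff)
  moreover from i i' t have "t i \<le> n" "t i \<noteq> q" "t i' \<le> n" "t i' \<noteq> q"
    by auto
  moreover from i i' \<open>i \<noteq> i'\<close> q have "copy_qubit n q (i - 1) \<noteq> copy_qubit n q (i' - 1)"
    by (auto simp: copy_qubit_eq_iff)
  ultimately show "disjnt (cgate_supp (Diag (copy_qubit n q (i - 1)) (t i) (th i)))
      (cgate_supp (Diag (copy_qubit n q (i' - 1)) (t i') (th i')))"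
    by (auto simp: disjnt_def copy_qubit_neq_input)
qed simp

lemma seq_perm_diags: "seq_perm (map (\<lambda>i. Diag (a i) (b i) (th i)) xs) = id"
  by (induction xs) auto

lemma seq_phase_diags_cong:
  assumes "\<forall>i\<in>set xs. pair_index (a i) (b i) x = pair_index (a' i) (b' i) x'"
  shows "seq_phase (map (\<lambda>i. Diag (a i) (b i) (th i)) xs) x =
    seq_phase (map (\<lambda>i. Diag (a' i) (b' i) (th i)) xs) x'"
  using assms by (induction xs) (auto simp: seq_perm_diags)

lemma monomial_mat_diag_product:
  assumes q: "q \<le> n" and t: "\<forall>i\<in>{1..n}. t i \<le> n \<and> t i \<noteq> q"
  shows "monomial_mat (n + 1) id (seq_phase (map (\<lambda>i. Diag q (t i) (th i)) (rev [1..<n + 1])))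
    (diag_product n q t th)"
proof -
  define Ds where "Ds = map (\<lambda>i. Diag q (t i) (th i)) (rev [1..<n + 1])"
  have "diag_product n q t th = layer_op (n + 1) (map to_gate Ds)"
    by (simp add: Ds_def diag_product_def layer_op_def foldr_map comp_def)
  moreover have "\<forall>g\<in>set Ds. wf_cgate (n + 1) g"
  proof
    fix g assume "g \<in> set Ds"
    then obtain i where i: "i \<in> set (rev [1..<n + 1])" and g: "g = Diag q (t i) (th i)"
      unfolding Ds_def set_map by blast
    from i t have "t i \<le> n" "t i \<noteq> q"
      by auto
    with q show "wf_cgate (n + 1) g"
      by (simp add: g)
  qed
  ultimately have "monomial_mat (n + 1) (seq_perm Ds) (seq_phase Ds) (diag_product n q t th)"
    by (simp only: monomial_mat_layer_op)
  then show ?thesis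
    by (simp only: Ds_def seq_perm_diags)
qed

lemma seq_perm_diag_layer: "seq_perm (diag_layer n q t th) = id"
  unfolding diag_layer_def by (rule seq_perm_diags)

lemma wf_layers_fanout_circuit:
  assumes "q \<le> n" and "\<forall>i\<in>{1..n}. t i \<le> n \<and> t i \<noteq> q" and "inj_on t {1..n}"
    and "n \<le> 2 ^ K"
  shows "\<forall>L\<in>set (fanout_circuit n q t th K). wf_layer (n + 2 ^ K) L"
  using wf_layer_fanout_pairs[OF assms(1)] wf_layer_diag_layer[OF assms]
  by (auto simp: fanout_circuit_def wf_layer_def)

lemma valid_layers_fanout_circuit:
  assumes "q \<le> n" and "\<forall>i\<in>{1..n}. t i \<le> n \<and> t i \<noteq> q" and "inj_on t {1..n}"
    and "n \<le> 2 ^ K"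
  shows "\<forall>L\<in>set (map (map to_gate) (fanout_circuit n q t th K)). valid_layer (n + 2 ^ K) L"
  using wf_layers_fanout_circuit[OF assms] valid_layer_map_to_gate by simp

lemma monomial_mat_fanout_circuit:
  assumes q: "q \<le> n" and t: "\<forall>i\<in>{1..n}. t i \<le> n \<and> t i \<noteq> q" and inj: "inj_on t {1..n}"
    and nK: "n \<le> 2 ^ K"
  shows "monomial_mat (n + 2 ^ K) id
      (\<lambda>x. seq_phase (diag_layer n q t th) (seq_perm (fanout_gates n q K) x))
      (circuit_op (n + 2 ^ K) (map (map to_gate) (fanout_circuit n q t th K)))"
proof -
  let ?G = "fanout_gates n q K" and ?D = "diag_layer n q t th"
  have "monomial_mat (n + 2 ^ K) (seq_perm (concat (fanout_circuit n q t th K)))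
      (seq_phase (concat (fanout_circuit n q t th K)))
      (circuit_op (n + 2 ^ K) (map (map to_gate) (fanout_circuit n q t th K)))"
    using wf_layers_fanout_circuit[OF assms] by (intro monomial_mat_circuit_op) (auto simp: wf_layer_def)
  then have "monomial_mat (n + 2 ^ K) (seq_perm (rev ?G @ ?D @ ?G)) (seq_phase (rev ?G @ ?D @ ?G))
      (circuit_op (n + 2 ^ K) (map (map to_gate) (fanout_circuit n q t th K)))"
    by (simp only: concat_fanout_circuit)
  moreover have "seq_perm (rev ?G @ ?D @ ?G) = id"
  proof -
    have "a \<noteq> b" if "(a, b) \<in> set (fanout_pairs n q r)" for a b r
      using fanout_pairs_controls_targets(2)[OF q, of r] that
      by (metis IntI empty_iff fst_conv image_eqI snd_conv)
    then have "\<forall>(a, b)\<in>set (concat (rev (map (fanout_pairs n q) [0..<K]))). a \<noteq> b"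
      by auto
    then show ?thesis
      by (auto simp: seq_perm_append seq_perm_diag_layer fanout_gates_def seq_perm_rev_cnots_inverse)
  qed
  moreover have "seq_phase (rev ?G @ ?D @ ?G) = (\<lambda>x. seq_phase ?D (seq_perm ?G x))"
    by (rule ext) (simp add: seq_phase_append seq_perm_append fanout_gates_def rev_cnots seq_phase_cnots)
  ultimately show ?thesis
    by simp
qed

theorem embeds_diag_product_fanout_circuit:
  assumes q: "q \<le> n" and t: "\<forall>i\<in>{1..n}. t i \<le> n \<and> t i \<noteq> q" and inj: "inj_on t {1..n}"
    and nK: "n \<le> 2 ^ K"
  shows "embeds (n + 1) (2 ^ K - 1) (diag_product n q t th)
    (circuit_op (n + 2 ^ K) (map (map to_gate) (fanout_circuit n q t th K)))"
proof -
  have "n + 1 + (2 ^ K - 1) = n + 2 ^ K"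
    by simp
  moreover have "seq_phase (diag_layer n q t th) (seq_perm (fanout_gates n q K) x) =
      seq_phase (map (\<lambda>i. Diag q (t i) (th i)) (rev [1..<n + 1])) x" if x: "x < 2 ^ (n + 1)" for x
    unfolding diag_layer_def
  proof (rule seq_phase_diags_cong, rule ballI)
    fix i assume "i \<in> set (rev [1..<n + 1])"
    with t nK have "i - 1 < 2 ^ K" "t i \<le> n"
      by auto
    then have "bit (seq_perm (fanout_gates n q K) x) (copy_qubit n q (i - 1)) = bit x q"
      and "bit (seq_perm (fanout_gates n q K) x) (t i) = bit x (t i)"
      using bit_seq_perm_fanout_gates_copy[OF q x] bit_seq_perm_fanout_gates[OF q x] by auto
    then show "pair_index (copy_qubit n q (i - 1)) (t i) (seq_perm (fanout_gates n q K) x) =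
        pair_index q (t i) x"
      by (simp add: pair_index_def bitq_eq_of_bool_bit)
  qed
  ultimately show ?thesis
    using monomial_mat_fanout_circuit[OF assms] monomial_mat_diag_product[OF q t]
    by (intro embeds_if_diagonal_phases_agree) auto
qed

section \<open>Size bounds\<close>

lemma fanout_ancillae_bound:
  assumes "2 ^ e < n"
  shows "real (2 ^ (e + 1) - 1) \<le> 5 / ln 2 * real n"
proof -
  have "ln 2 \<le> (1::real)"
    using ln_le_minus_one[of 2] by simp
  then have "2 \<le> 5 / ln (2::real)"
    by (simp add: le_divide_eq)
  then have "2 * real n \<le> 5 / ln 2 * real n"
    by (intro mult_right_mono) auto
  moreover have "2 ^ (e + 1) - 1 \<le> 2 * n"
    using assms by simp
  then have "real (2 ^ (e + 1) - 1) \<le> real (2 * n)"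
    by (rule of_nat_mono)
  ultimately show ?thesis
    by simp
qed

lemma fanout_depth_bound:
  assumes "2 ^ e < n"
  shows "real (2 * (e + 1) + 1) \<le> 5 / ln 2 * ln (real n)"
proof -
  have "real e < log 2 n"
    using assms by (rule less_log2_of_power)
  moreover have "(2::nat) ^ 1 \<le> n"
    using assms one_le_power[of "2::nat" e] by (simp only: power_one_right) linarith
  then have "1 \<le> log 2 n"
    using le_log2_of_power[of 1 n] by simp
  ultimately have "real (2 * (e + 1) + 1) \<le> 5 * log 2 n"
    by simp
  then show ?thesis
    by (simp add: log_def)
qed

theorem proposition3:
  shows "\<exists>c::real. c > 0 \<and>
    (\<forall>n::nat. n \<ge> 2 \<longrightarrow>
      (\<forall>(q::nat) (t::nat \<Rightarrow> nat) (th::nat \<Rightarrow> nat \<Rightarrow> real).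
         q \<le> n \<longrightarrow> (\<forall>i\<in>{1..n}. t i \<le> n \<and> t i \<noteq> q) \<longrightarrow> inj_on t {1..n} \<longrightarrow>
         (\<exists>(m::nat) (C::gate list list).
            real m \<le> c * real n \<and>
            real (length C) \<le> c * ln (real n) \<and>
            (\<forall>L \<in> set C. valid_layer (n + 1 + m) L) \<and>
            embeds (n + 1) m (diag_product n q t th) (circuit_op (n + 1 + m) C))))"
proof (intro exI[of _ "5 / ln 2"] conjI allI impI)
  show "0 < 5 / ln (2::real)"
    by simp
  fix n q :: nat and t :: "nat \<Rightarrow> nat" and th :: "nat \<Rightarrow> nat \<Rightarrow> real"
  assume "2 \<le> n" and q: "q \<le> n" and t: "\<forall>i\<in>{1..n}. t i \<le> n \<and> t i \<noteq> q"
    and inj: "inj_on t {1..n}"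
  then obtain e where e: "2 ^ e < n" "n \<le> 2 ^ (e + 1)"
    using ex_power_ivl2[of 2 n] by auto
  define m :: nat where "m = 2 ^ (e + 1) - 1"
  define C where "C = map (map to_gate) (fanout_circuit n q t th (e + 1))"
  have N: "n + 1 + m = n + 2 ^ (e + 1)"
    by (simp add: m_def)
  have "real m \<le> 5 / ln 2 * real n"
    using fanout_ancillae_bound[OF e(1)] by (simp add: m_def)
  moreover have "real (length C) \<le> 5 / ln 2 * ln (real n)"
    using fanout_depth_bound[OF e(1)] by (simp add: C_def length_fanout_circuit)
  moreover have "\<forall>L\<in>set C. valid_layer (n + 1 + m) L"
    unfolding N C_def by (rule valid_layers_fanout_circuit[OF q t inj e(2)])
  moreover have "embeds (n + 1) m (diag_product n q t th) (circuit_op (n + 1 + m) C)"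
    unfolding N unfolding m_def C_def by (rule embeds_diag_product_fanout_circuit[OF q t inj e(2)])
  ultimately show "\<exists>m C. real m \<le> 5 / ln 2 * real n \<and> real (length C) \<le> 5 / ln 2 * ln (real n) \<and>
      (\<forall>L\<in>set C. valid_layer (n + 1 + m) L) \<and>
      embeds (n + 1) m (diag_product n q t th) (circuit_op (n + 1 + m) C)"
    by blast
qed

end
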